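(* Let $\{X_i\}_{i\ge1}$ be i.i.d. symmetric random variables with $P(X_1=0)=0$, belonging to the domain of attraction of the $N(0,1)$ distribution, and let $V_j=(\sum_{i=1}^j X_i^2)^{1/2}$. Then for all integers $1\le j<k$, \[ E\Big(\frac{X_{j+1}^2}{V_{j+1}^2}\,\frac{X_{k+1}^2}{V_{k+1}^2}\Big)=\frac{1}{(j+1)(k+1)}. \]
   Context: A random variable $X$ is in the domain of attraction of $N(0,1)$ if there exist constants $a_n>0$ such that $(X_1+\cdots+X_n)/a_n$ converges in distribution to $N(0,1)$ for i.i.d. copies $X_i$ of $X$. *)

theory Defs
  imports "HOL-Probability.Probability"
begin

definition in_DoA_normal :: "'a measure \<Rightarrow> (nat \<Rightarrow> 'a \<Rightarrow> real) \<Rightarrow> bool" where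
  "in_DoA_normal M X \<longleftrightarrow>
     (\<exists>a :: nat \<Rightarrow> real. (\<forall>n. a n > 0) \<and>
        weak_conv_m (\<lambda>n. distr M borel (\<lambda>\<omega>. (\<Sum>i=1..n. X i \<omega>) / a n))
                    std_normal_distribution)"

definition selfnorm :: "(nat \<Rightarrow> 'a \<Rightarrow> real) \<Rightarrow> nat \<Rightarrow> 'a \<Rightarrow> real" where
  "selfnorm X j \<omega> = sqrt (\<Sum>i=1..j. (X i \<omega>)^2)"

end

theory Submission
  imports Defs
begin

text \<open>For i.i.d. variables the joint law is invariant under permutations of the indices.
  Hence E[X_i^2/V_m^2] is the same for all i \<le> m, and since these ratios sum to 1 almost
  surely, each expectation equals 1/m. Likewise, for n < m the transposition of i \<le> n and n
  fixes V_n, V_m and X_m, so E[X_i^2/V_n^2 * X_m^2/V_m^2] does not depend on i \<le> n; summing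
  over i yields E[X_m^2/V_m^2] = 1/m, so each term equals 1/(nm).\<close>

lemma (in prob_space) integral_permute_iid:
  fixes X :: "'i \<Rightarrow> 'a \<Rightarrow> real" and f :: "('i \<Rightarrow> real) \<Rightarrow> real"
  assumes indep: "indep_vars (\<lambda>_. borel) X I"
    and ident: "\<And>i i'. i \<in> I \<Longrightarrow> i' \<in> I \<Longrightarrow> distr M borel (X i) = distr M borel (X i')"
    and s: "s permutes I"
    and f: "f \<in> borel_measurable (\<Pi>\<^sub>M i\<in>I. borel)"
    and f_local: "\<And>x y. (\<And>i. i \<in> I \<Longrightarrow> x i = y i) \<Longrightarrow> f x = f y"
  shows "(\<integral>\<omega>. f (\<lambda>i. X (s i) \<omega>) \<partial>M) = (\<integral>\<omega>. f (\<lambda>i. X i \<omega>) \<partial>M)"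
proof (cases "I = {}")
  case True
  then show ?thesis using s by simp
next
  case False
  define V where "V \<omega> = (\<lambda>i\<in>I. X i \<omega>)" for \<omega>
  define T where "T x = (\<lambda>i\<in>I. x (s i))" for x :: "'i \<Rightarrow> real"
  define P where "P = (\<Pi>\<^sub>M i\<in>I. distr M borel (X i))"
  have rv: "random_variable borel (X i)" if "i \<in> I" for i
    using indep that by (simp add: indep_vars_def2)
  have sets_P: "sets P = sets (\<Pi>\<^sub>M i\<in>I. borel)"
    unfolding P_def by (intro sets_PiM_cong) auto
  have V: "V \<in> measurable M P"
    unfolding measurable_cong_sets[OF refl sets_P] V_def using rv by (auto intro!: measurable_restrict)
  have distr_V: "distr M P V = P"
  proof -
    have "distr M P V = distr M (\<Pi>\<^sub>M i\<in>I. borel) V"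
      by (rule distr_cong[OF refl sets_P refl])
    also have "\<dots> = P"
      using indep_vars_iff_distr_eq_PiM'[OF False, where M'="\<lambda>_. borel" and X=X] rv indep
      by (simp add: V_def[abs_def] P_def)
    finally show ?thesis .
  qed
  have s_I: "inj_on s I" "s \<in> I \<rightarrow> I"
    using permutes_inj_on[OF s] permutes_in_image[OF s] by auto
  have T: "T \<in> measurable P P"
    unfolding measurable_cong_sets[OF sets_P sets_P] T_def using s_I
    by (auto intro!: measurable_restrict measurable_component_singleton)
  have P_reindex: "(\<Pi>\<^sub>M i\<in>I. distr M borel (X (s i))) = P"
    unfolding P_def using s_I(2) by (intro PiM_cong refl ident) auto
  have distr_T: "distr P P T = P"
  proof -
    have "distr P (\<Pi>\<^sub>M i\<in>I. distr M borel (X (s i))) T = (\<Pi>\<^sub>M i\<in>I. distr M borel (X (s i)))"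
      unfolding P_def T_def using s_I rv by (intro distr_PiM_reindex prob_space_distr) auto
    then show ?thesis unfolding P_reindex .
  qed
  have f_P: "f \<in> borel_measurable P"
    using f by (simp add: measurable_cong_sets[OF sets_P refl])
  have "(\<integral>\<omega>. f (\<lambda>i. X (s i) \<omega>) \<partial>M) = (\<integral>\<omega>. f (T (V \<omega>)) \<partial>M)"
    using s_I(2) by (intro Bochner_Integration.integral_cong refl f_local) (auto simp: T_def V_def)
  also have "\<dots> = (\<integral>x. f (T x) \<partial>distr M P V)"
    using measurable_compose[OF T f_P] by (intro integral_distr[symmetric] V) (simp add: comp_def)
  also have "\<dots> = (\<integral>x. f x \<partial>distr P P T)"
    unfolding distr_V by (rule integral_distr[symmetric, OF T f_P])
  also have "\<dots> = (\<integral>\<omega>. f (V \<omega>) \<partial>M)"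
    unfolding distr_T by (subst distr_V[symmetric]) (rule integral_distr[OF V f_P])
  also have "\<dots> = (\<integral>\<omega>. f (\<lambda>i. X i \<omega>) \<partial>M)"
    by (intro Bochner_Integration.integral_cong refl f_local) (simp add: V_def)
  finally show ?thesis .
qed

definition selfnorm_ratio :: "nat \<Rightarrow> nat \<Rightarrow> (nat \<Rightarrow> real) \<Rightarrow> real" where
  "selfnorm_ratio p i x = (x i)^2 / (\<Sum>l=1..p. (x l)^2)"

lemma selfnorm_ratio_permute:
  assumes "s permutes {1..p}"
  shows "selfnorm_ratio p i (\<lambda>l. x (s l)) = selfnorm_ratio p (s i) x"
proof -
  have "(\<Sum>l=1..p. (x (s l))^2) = (\<Sum>l=1..p. (x l)^2)"
    using sum.permute[OF assms, of "\<lambda>l. (x l)^2"] by (simp add: comp_def)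
  then show ?thesis
    by (simp add: selfnorm_ratio_def)
qed

lemma selfnorm_ratio_cong:
  assumes "\<And>l. l \<in> I \<Longrightarrow> x l = y l" "i \<in> I" "{1..p} \<subseteq> I"
  shows "selfnorm_ratio p i x = selfnorm_ratio p i y"
  unfolding selfnorm_ratio_def using assms by (auto intro!: sum.cong)

lemma selfnorm_ratio_nonneg: "0 \<le> selfnorm_ratio p i x"
  unfolding selfnorm_ratio_def by (intro divide_nonneg_nonneg sum_nonneg) auto

lemma selfnorm_ratio_le_1:
  assumes "i \<in> {1..p}"
  shows "selfnorm_ratio p i x \<le> 1"
proof -
  have "(x i)^2 \<le> (\<Sum>l=1..p. (x l)^2)"
    using assms by (intro member_le_sum) auto
  then show ?thesis
    unfolding selfnorm_ratio_def by (auto simp: divide_le_eq_1 less_le sum_nonneg)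
qed

lemma sum_selfnorm_ratio:
  assumes "l \<in> {1..p}" "x l \<noteq> 0"
  shows "(\<Sum>i=1..p. selfnorm_ratio p i x) = 1"
proof -
  have "(x l)^2 \<le> (\<Sum>l=1..p. (x l)^2)"
    using assms by (intro member_le_sum) auto
  moreover have "0 < (x l)^2"
    using assms by simp
  ultimately have "(\<Sum>l=1..p. (x l)^2) \<noteq> 0"
    by linarith
  then show ?thesis
    unfolding selfnorm_ratio_def by (simp add: sum_divide_distrib[symmetric])
qed

lemma borel_measurable_selfnorm_ratio:
  fixes X :: "nat \<Rightarrow> 'a \<Rightarrow> real"
  assumes "\<And>l. l \<in> insert i {1..p} \<Longrightarrow> X l \<in> borel_measurable M"
  shows "(\<lambda>\<omega>. selfnorm_ratio p i (\<lambda>l. X l \<omega>)) \<in> borel_measurable M"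
  unfolding selfnorm_ratio_def using assms
  by (intro borel_measurable_divide borel_measurable_sum borel_measurable_power) auto

lemma integral_eq_average:
  fixes g :: "'i \<Rightarrow> 'a \<Rightarrow> real"
  assumes A: "finite A" "i \<in> A"
    and g: "\<And>i'. i' \<in> A \<Longrightarrow> integrable M (g i')"
    and same: "\<And>i'. i' \<in> A \<Longrightarrow> integral\<^sup>L M (g i') = integral\<^sup>L M (g i)"
    and h: "h \<in> borel_measurable M"
    and sum_g: "AE \<omega> in M. (\<Sum>i'\<in>A. g i' \<omega>) = h \<omega>"
  shows "integral\<^sup>L M (g i) = integral\<^sup>L M h / card A"
proof -
  have "integral\<^sup>L M h = (\<integral>\<omega>. (\<Sum>i'\<in>A. g i' \<omega>) \<partial>M)"
    using g h sum_g by (intro integral_cong_AE) auto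
  also have "\<dots> = (\<Sum>i'\<in>A. integral\<^sup>L M (g i'))"
    using g by (rule Bochner_Integration.integral_sum)
  also have "\<dots> = card A * integral\<^sup>L M (g i)"
    using same by simp
  finally show ?thesis
    using A by auto
qed

lemma (in finite_measure) integrable_selfnorm_ratio:
  fixes X :: "nat \<Rightarrow> 'a \<Rightarrow> real"
  assumes "\<And>l. l \<in> {1..p} \<Longrightarrow> X l \<in> borel_measurable M" "i \<in> {1..p}"
  shows "integrable M (\<lambda>\<omega>. selfnorm_ratio p i (\<lambda>l. X l \<omega>))"
  using assms
  by (intro integrable_const_bound[where B=1] borel_measurable_selfnorm_ratio AE_I2)
     (auto simp: selfnorm_ratio_nonneg selfnorm_ratio_le_1)

lemma (in prob_space) integral_selfnorm_ratio:
  fixes X :: "nat \<Rightarrow> 'a \<Rightarrow> real"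
  assumes indep: "indep_vars (\<lambda>_. borel) X {1..m}"
    and ident: "\<And>i i'. i \<in> {1..m} \<Longrightarrow> i' \<in> {1..m} \<Longrightarrow> distr M borel (X i) = distr M borel (X i')"
    and nonzero: "AE \<omega> in M. X 1 \<omega> \<noteq> 0"
    and i: "i \<in> {1..m}"
  shows "(\<integral>\<omega>. selfnorm_ratio m i (\<lambda>l. X l \<omega>) \<partial>M) = 1 / m"
proof -
  define R where "R i' = (\<lambda>\<omega>. selfnorm_ratio m i' (\<lambda>l. X l \<omega>))" for i'
  have rv: "X l \<in> borel_measurable M" if "l \<in> {1..m}" for l
    using indep that by (simp add: indep_vars_def2)
  have same: "integral\<^sup>L M (R i') = integral\<^sup>L M (R m)" if "i' \<in> {1..m}" for i'
  proof -
    have s: "Transposition.transpose i' m permutes {1..m}"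
      using that i by (intro permutes_swap_id) auto
    have "(\<integral>\<omega>. selfnorm_ratio m m (\<lambda>l. X (Transposition.transpose i' m l) \<omega>) \<partial>M) = integral\<^sup>L M (R m)"
      unfolding R_def using i
      by (intro integral_permute_iid[OF indep ident s] borel_measurable_selfnorm_ratio
          measurable_component_singleton selfnorm_ratio_cong[where I="{1..m}"]) auto
    moreover have "selfnorm_ratio m m (\<lambda>l. X (Transposition.transpose i' m l) \<omega>) = R i' \<omega>" for \<omega>
      using selfnorm_ratio_permute[OF s, where x="\<lambda>l. X l \<omega>" and i=m] by (simp add: R_def)
    ultimately show ?thesis
      by simp
  qed
  have "AE \<omega> in M. (\<Sum>i'\<in>{1..m}. R i' \<omega>) = 1"
    using nonzero unfolding R_def
    by eventually_elim (rule sum_selfnorm_ratio[where l=1], use i in auto)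
  moreover have "integrable M (R i')" if "i' \<in> {1..m}" for i'
    unfolding R_def using rv that by (intro integrable_selfnorm_ratio) auto
  ultimately have "integral\<^sup>L M (R m) = integral\<^sup>L M (\<lambda>_. 1) / card {1..m}"
    using i by (intro integral_eq_average[where g=R] same) auto
  then have "integral\<^sup>L M (R i) = 1 / m"
    using same[OF i] by (simp add: prob_space)
  then show ?thesis
    by (simp add: R_def)
qed

lemma (in prob_space) integral_selfnorm_ratio_mult:
  fixes X :: "nat \<Rightarrow> 'a \<Rightarrow> real"
  assumes indep: "indep_vars (\<lambda>_. borel) X {1..m}"
    and ident: "\<And>i i'. i \<in> {1..m} \<Longrightarrow> i' \<in> {1..m} \<Longrightarrow> distr M borel (X i) = distr M borel (X i')"
    and nonzero: "AE \<omega> in M. X 1 \<omega> \<noteq> 0"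
    and i: "i \<in> {1..n}" and "n < m"
  shows "(\<integral>\<omega>. selfnorm_ratio n i (\<lambda>l. X l \<omega>) * selfnorm_ratio m m (\<lambda>l. X l \<omega>) \<partial>M) = 1 / (n * m)"
proof -
  define Q where
    "Q i' = (\<lambda>\<omega>. selfnorm_ratio n i' (\<lambda>l. X l \<omega>) * selfnorm_ratio m m (\<lambda>l. X l \<omega>))" for i'
  have rv: "X l \<in> borel_measurable M" if "l \<in> {1..m}" for l
    using indep that by (simp add: indep_vars_def2)
  have same: "integral\<^sup>L M (Q i') = integral\<^sup>L M (Q n)" if i': "i' \<in> {1..n}" for i'
  proof -
    have s_n: "Transposition.transpose i' n permutes {1..n}"
      using i' i by (intro permutes_swap_id) auto
    moreover have "{1..n} \<subseteq> {1..m}"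
      using \<open>n < m\<close> by auto
    ultimately have s_m: "Transposition.transpose i' n permutes {1..m}"
      by (rule permutes_subset)
    have "(\<integral>\<omega>. selfnorm_ratio n n (\<lambda>l. X (Transposition.transpose i' n l) \<omega>) *
        selfnorm_ratio m m (\<lambda>l. X (Transposition.transpose i' n l) \<omega>) \<partial>M) = integral\<^sup>L M (Q n)"
      unfolding Q_def using i \<open>n < m\<close>
      by (intro integral_permute_iid[OF indep ident s_m] borel_measurable_times
          borel_measurable_selfnorm_ratio measurable_component_singleton
          arg_cong2[where f="(*)"] selfnorm_ratio_cong[where I="{1..m}"]) auto
    moreover have "Transposition.transpose i' n m = m"
      using i' \<open>n < m\<close> by auto
    then have "selfnorm_ratio n n (\<lambda>l. X (Transposition.transpose i' n l) \<omega>) *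
        selfnorm_ratio m m (\<lambda>l. X (Transposition.transpose i' n l) \<omega>) = Q i' \<omega>" for \<omega>
      using selfnorm_ratio_permute[OF s_n, where x="\<lambda>l. X l \<omega>" and i=n]
        selfnorm_ratio_permute[OF s_m, where x="\<lambda>l. X l \<omega>" and i=m]
      by (simp add: Q_def)
    ultimately show ?thesis
      by simp
  qed
  have "AE \<omega> in M. (\<Sum>i'\<in>{1..n}. Q i' \<omega>) = selfnorm_ratio m m (\<lambda>l. X l \<omega>)"
    using nonzero unfolding Q_def sum_distrib_right[symmetric]
    by eventually_elim (subst sum_selfnorm_ratio[where l=1], use i in auto)
  moreover have "integrable M (Q i')" if "i' \<in> {1..n}" for i'
    unfolding Q_def using rv that \<open>n < m\<close>
    by (intro integrable_const_bound[where B=1] borel_measurable_times borel_measurable_selfnorm_ratio AE_I2)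
       (auto simp: abs_mult selfnorm_ratio_nonneg selfnorm_ratio_le_1 intro!: mult_le_one)
  moreover have "(\<lambda>\<omega>. selfnorm_ratio m m (\<lambda>l. X l \<omega>)) \<in> borel_measurable M"
    using rv \<open>n < m\<close> by (intro borel_measurable_selfnorm_ratio) auto
  ultimately have "integral\<^sup>L M (Q n) = (\<integral>\<omega>. selfnorm_ratio m m (\<lambda>l. X l \<omega>) \<partial>M) / card {1..n}"
    using i by (intro integral_eq_average[where g=Q] same) auto
  also have "\<dots> = 1 / (n * m)"
    using integral_selfnorm_ratio[OF indep ident nonzero, of m] \<open>n < m\<close> by simp
  finally show ?thesis
    using same[OF i] by (simp add: Q_def)
qed

lemma sq_div_selfnorm_sq: "(X i \<omega>)^2 / (selfnorm X p \<omega>)^2 = selfnorm_ratio p i (\<lambda>l. X l \<omega>)"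
  by (simp add: selfnorm_def selfnorm_ratio_def sum_nonneg)

theorem lemma4p3:
  fixes M :: "'a measure" and X :: "nat \<Rightarrow> 'a \<Rightarrow> real" and j k :: nat
  assumes "prob_space M"
    and "\<And>i. i \<ge> 1 \<Longrightarrow> X i \<in> borel_measurable M"
    and "prob_space.indep_vars M (\<lambda>i. borel) X {1..}"
    and "\<And>i. i \<ge> 1 \<Longrightarrow> distr M borel (X i) = distr M borel (X 1)"
    and "distr M borel (\<lambda>\<omega>. - X 1 \<omega>) = distr M borel (X 1)"
    and "measure M {\<omega> \<in> space M. X 1 \<omega> = 0} = 0"
    and "in_DoA_normal M X"
    and "1 \<le> j" and "j < k"
  shows "integral\<^sup>L M (\<lambda>\<omega>. ((X (j+1) \<omega>)^2 / (selfnorm X (j+1) \<omega>)^2) *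
                           ((X (k+1) \<omega>)^2 / (selfnorm X (k+1) \<omega>)^2))
         = 1 / (real (j+1) * real (k+1))"
proof -
  interpret prob_space M by fact
  have indep: "indep_vars (\<lambda>_. borel) X {1..k+1}"
    using assms(3) by (rule indep_vars_subset) auto
  have ident: "distr M borel (X i) = distr M borel (X i')" if "i \<in> {1..k+1}" "i' \<in> {1..k+1}" for i i'
    using assms(4)[of i] assms(4)[of i'] that by simp
  have "{\<omega> \<in> space M. X 1 \<omega> = 0} \<in> null_sets M"
    using assms(2,6) by (auto simp: null_sets_def emeasure_eq_measure)
  then have nonzero: "AE \<omega> in M. X 1 \<omega> \<noteq> 0"
    by (rule AE_I') auto
  show ?thesis
    unfolding sq_div_selfnorm_sq
    using integral_selfnorm_ratio_mult[OF indep ident nonzero, where i="j+1" and n="j+1"] assms(9)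
    by simp
qed

end
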